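(* Let $\Gamma$ be a gain operator on $\ell^\infty_+(\mathcal I)$. The following are equivalent: (a) the set $\Psi(\Gamma)$ is cofinal; (b) for every $b\in\ell^\infty_+(\mathcal I)$, every trajectory of $\Sigma(\Gamma^{\oplus}_b)$ is norm-bounded, where $\Gamma^\oplus_b(s):=b\oplus\Gamma(s)$; (c) every trajectory of $\Sigma(\hat\Gamma)$ is norm-bounded, where $\hat\Gamma(s):=s\oplus\Gamma(s)$; (d) for every $s\ge0$ there exist $\hat s\ge0$ and $n\in\mathbb N$ with $s\le\Gamma^l(\hat s)$ for $0\le l<n$ and $\Gamma^n(\hat s)\le\hat s$.
   Context: Let $\mathcal I$ be a nonempty countable index set; $\ell^\infty_+(\mathcal I)$ is the cone of nonnegative real families $s=(s_i)_{i\in\mathcal I}$ with $\|s\|:=\sup_i|s_i|<\infty$, ordered componentwise; $\oplus$ is the componentwise maximum. $\mathcal K_\infty$: continuous strictly increasing unbounded $\gamma:\mathbb R_+\to\mathbb R_+$ with $\gamma(0)=0$. For $\mathcal J\subset\mathcal I$, $s_{|\mathcal J}$ agrees with $s$ on $\mathcal J$ and is $0$ elsewhere. Gain operator: for each $i$ a finite (possibly empty) $\mathcal I_i\subset\mathcal I\setminus\{i\}$; directed graph $\mathcal G$ with vertices $\mathcal I$ and edges $ji$, $j\in\mathcal I_i$; a pointwise equicontinuous family $\gamma_{ij}\in\mathcal K_\infty$ ($ji\in E(\mathcal G)$); functions $\mu_i:\ell^\infty_+(\mathcal I)\to[0,\infty]$ with (M1) some $\xi\in\mathcal K_\infty$ has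 $\mu_i(0)=0$, $\mu_i(s)\ge\xi(\|s\|)$; (M2) $\mu_i$ monotone; (M3) for each finite $\mathcal J$, $\mu_i$ restricted to vectors vanishing off $\mathcal J$ is finite-valued and continuous; (M4) for each norm-bounded $A$ and $\varepsilon>0$ there is $\delta>0$ with $\sup_i|\mu_i(s_{|\mathcal I_i})-\mu_i(s^0_{|\mathcal I_i})|\le\varepsilon$ whenever $s^0\in A$, $\|s-s^0\|\le\delta$. $\Gamma_i(s):=\mu_i([\gamma_{ij}(s_j)]_{j\in\mathcal I_i})$ (argument zero outside $\mathcal I_i$). For monotone $T$: $\Psi(T):=\{s:T(s)\le s\}$; $\Sigma(T)$ is the system $s^{n+1}=T(s^n)$, whose trajectories are $(T^n(s))_{n\ge0}$. A set $A$ is cofinal if every $s\in\ell^\infty_+(\mathcal I)$ has some $\hat s\in A$ with $s\le\hat s$. *)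

theory Defs
  imports "HOL-Analysis.Analysis" "HOL-Library.Extended_Nonnegative_Real"
begin

definition lpos :: "('i \<Rightarrow> real) set" where
  "lpos = {s. (\<forall>i. 0 \<le> s i) \<and> bdd_above (range (\<lambda>i. \<bar>s i\<bar>))}"

definition linf_norm :: "('i \<Rightarrow> real) \<Rightarrow> real" where
  "linf_norm s = (SUP i. \<bar>s i\<bar>)"

definition omax :: "('i \<Rightarrow> real) \<Rightarrow> ('i \<Rightarrow> real) \<Rightarrow> ('i \<Rightarrow> real)" where
  "omax s t = (\<lambda>i. max (s i) (t i))"

definition restr :: "('i \<Rightarrow> real) \<Rightarrow> 'i set \<Rightarrow> ('i \<Rightarrow> real)" where
  "restr s J = (\<lambda>i. if i \<in> J then s i else 0)"

definition Kinf :: "(real \<Rightarrow> real) \<Rightarrow> bool" where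
  "Kinf g \<longleftrightarrow> continuous_on {0..} g \<and> strict_mono_on {0..} g \<and> g 0 = 0 \<and>
     (\<forall>M. \<exists>r\<ge>0. g r > M)"

text \<open>The gain operator: \<Gamma>_i(s) = \<mu>_i([\<gamma>_ij(s_j)]_{j \<in> I_i}), argument zero outside I_i.
  The value is finite by (M3), so we take its real part.\<close>
definition Gam :: "('i \<Rightarrow> 'i set) \<Rightarrow> ('i \<Rightarrow> 'i \<Rightarrow> real \<Rightarrow> real) \<Rightarrow> ('i \<Rightarrow> ('i \<Rightarrow> real) \<Rightarrow> ennreal)
     \<Rightarrow> ('i \<Rightarrow> real) \<Rightarrow> ('i \<Rightarrow> real)" where
  "Gam II \<gamma> \<mu> s = (\<lambda>i. enn2real (\<mu> i (\<lambda>j. if j \<in> II i then \<gamma> i j (s j) else 0)))"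

definition gain_operator :: "('i \<Rightarrow> 'i set) \<Rightarrow> ('i \<Rightarrow> 'i \<Rightarrow> real \<Rightarrow> real) \<Rightarrow> ('i \<Rightarrow> ('i \<Rightarrow> real) \<Rightarrow> ennreal) \<Rightarrow> bool" where
  "gain_operator II \<gamma> \<mu> \<longleftrightarrow>
    \<comment> \<open>finite neighbour sets, no self loops\<close>
    (\<forall>i. finite (II i) \<and> i \<notin> II i) \<and>
    \<comment> \<open>gains are K-infinity functions\<close>
    (\<forall>i. \<forall>j\<in>II i. Kinf (\<gamma> i j)) \<and>
    \<comment> \<open>pointwise equicontinuity of the family of gains\<close>
    (\<forall>r\<ge>0. \<forall>\<epsilon>>0. \<exists>\<delta>>0. \<forall>i. \<forall>j\<in>II i. \<forall>r'\<ge>0. \<bar>r' - r\<bar> < \<delta> \<longrightarrow> \<bar>\<gamma> i j r' - \<gamma> i j r\<bar> < \<epsilon>) \<and>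
    \<comment> \<open>(M1)\<close>
    (\<exists>\<xi>. Kinf \<xi> \<and> (\<forall>i. \<mu> i (\<lambda>_. 0) = 0 \<and> (\<forall>s\<in>lpos. ennreal (\<xi> (linf_norm s)) \<le> \<mu> i s))) \<and>
    \<comment> \<open>(M2)\<close>
    (\<forall>i. \<forall>s\<in>lpos. \<forall>t\<in>lpos. s \<le> t \<longrightarrow> \<mu> i s \<le> \<mu> i t) \<and>
    \<comment> \<open>(M3)\<close>
    (\<forall>i. \<forall>J. finite J \<longrightarrow>
       (let V = {s\<in>lpos. \<forall>j. j \<notin> J \<longrightarrow> s j = 0} in
         (\<forall>s\<in>V. \<mu> i s < \<infinity>) \<and>
         (\<forall>s\<in>V. \<forall>\<epsilon>>0. \<exists>\<delta>>0. \<forall>t\<in>V. linf_norm (t - s) < \<delta> \<longrightarrow>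
              \<bar>enn2real (\<mu> i t) - enn2real (\<mu> i s)\<bar> < \<epsilon>))) \<and>
    \<comment> \<open>(M4)\<close>
    (\<forall>A. A \<subseteq> lpos \<and> (\<exists>C. \<forall>s\<in>A. linf_norm s \<le> C) \<longrightarrow>
       (\<forall>\<epsilon>>0. \<exists>\<delta>>0. \<forall>s0\<in>A. \<forall>s\<in>lpos. linf_norm (s - s0) \<le> \<delta> \<longrightarrow>
          (SUP i. \<bar>enn2real (\<mu> i (restr s (II i))) - enn2real (\<mu> i (restr s0 (II i)))\<bar>) \<le> \<epsilon>))"

definition Psi :: "(('i \<Rightarrow> real) \<Rightarrow> ('i \<Rightarrow> real)) \<Rightarrow> ('i \<Rightarrow> real) set" where
  "Psi T = {s\<in>lpos. T s \<le> s}"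

definition cofinal :: "('i \<Rightarrow> real) set \<Rightarrow> bool" where
  "cofinal A \<longleftrightarrow> (\<forall>s\<in>lpos. \<exists>s'\<in>A. s \<le> s')"

definition trajectories_bounded :: "(('i \<Rightarrow> real) \<Rightarrow> ('i \<Rightarrow> real)) \<Rightarrow> bool" where
  "trajectories_bounded T \<longleftrightarrow> (\<forall>s\<in>lpos. \<exists>C. \<forall>n i. \<bar>(T ^^ n) s i\<bar> \<le> C)"

end

theory Submission
  imports Defs
begin

text \<open>If \<open>t \<in> \<Psi>(\<Gamma>)\<close> lies above \<open>b \<oplus> s\<close>, the monotone maps \<open>b \<oplus> \<Gamma>\<close> and \<open>\<hat>\<Gamma>\<close>
  send the order interval \<open>[0, t]\<close> into itself, so their trajectories from \<open>s\<close> are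
  bounded by \<open>t\<close>. Conversely, the trajectories from \<open>s\<close> of \<open>s \<oplus> \<Gamma>\<close> and of \<open>\<hat>\<Gamma>\<close> increase,
  so when they are bounded they converge pointwise to some \<open>t \<ge> s\<close>; as every \<open>\<Gamma>\<^sub>i\<close> depends
  continuously on the finitely many coordinates in \<open>\<I>\<^sub>i\<close>, passing to the limit in
  \<open>\<Gamma>(x\<^sub>k) \<le> x\<^sub>k\<^sub>+\<^sub>1\<close> yields \<open>\<Gamma>(t) \<le> t\<close>. Condition (d) generalises \<open>\<hat>s \<in> \<Psi>(\<Gamma>)\<close> (the case
  \<open>n = 1\<close>), and under it the trajectory of \<open>\<hat>\<Gamma>\<close> stays below each of
  \<open>\<hat>s, \<Gamma>(\<hat>s), \<dots>, \<Gamma>\<^bsup>n-1\<^esup>(\<hat>s)\<close>, since \<open>\<Gamma>\<^sup>n(\<hat>s) \<le> \<hat>s\<close> closes the cycle.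
  Only (M2), (M3) and the continuity of the gains are needed.\<close>

definition nonneg_cone :: "('i \<Rightarrow> real) set" where
  "nonneg_cone = {s. \<forall>i. 0 \<le> s i}"

lemma lpos_subset_nonneg_cone: "lpos \<subseteq> nonneg_cone"
  by (auto simp: lpos_def nonneg_cone_def)

lemma omax_mono: "s \<le> s' \<Longrightarrow> t \<le> t' \<Longrightarrow> omax s t \<le> omax s' t'"
  unfolding omax_def le_fun_def by (blast intro: max.mono)

lemma omax_upper1: "s \<le> omax s t" and omax_upper2: "t \<le> omax s t"
  by (auto simp: omax_def le_fun_def)

lemma omax_le_iff: "omax s t \<le> u \<longleftrightarrow> s \<le> u \<and> t \<le> u"
  by (auto simp: omax_def le_fun_def)

lemma omax_in_nonneg_cone: "s \<in> nonneg_cone \<Longrightarrow> omax s t \<in> nonneg_cone"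
  by (auto simp: nonneg_cone_def omax_def le_max_iff_disj)

lemma lpos_bounded:
  assumes "s \<in> lpos"
  obtains C where "\<And>i. s i \<le> C"
proof -
  obtain C where C: "\<And>i. \<bar>s i\<bar> \<le> C"
    using assms unfolding lpos_def bdd_above_def by blast
  show thesis
  proof (rule that)
    fix i show "s i \<le> C"
      using C[of i] abs_ge_self[of "s i"] by linarith
  qed
qed

lemma lposI:
  assumes "s \<in> nonneg_cone" "\<And>i. s i \<le> C"
  shows "s \<in> lpos"
  using assms unfolding lpos_def nonneg_cone_def by (auto intro!: bdd_aboveI2[where M = C])

lemma omax_in_lpos:
  assumes b: "b \<in> lpos" and s: "s \<in> lpos"
  shows "omax b s \<in> lpos"
proof -
  obtain B S where "\<And>i. b i \<le> B" "\<And>i. s i \<le> S"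
    using lpos_bounded[OF b] lpos_bounded[OF s] by metis
  then have "omax b s i \<le> max B S" for i
    by (simp add: omax_def max.coboundedI1 max.coboundedI2)
  moreover have "omax b s \<in> nonneg_cone"
    using b lpos_subset_nonneg_cone by (blast intro: omax_in_nonneg_cone)
  ultimately show ?thesis
    by (blast intro: lposI)
qed

lemma bounded_if_below_lpos:
  assumes "t \<in> lpos" "\<And>n. x n \<in> nonneg_cone" "\<And>n. x n \<le> t"
  shows "\<exists>C. \<forall>n i. \<bar>x n i\<bar> \<le> C"
proof -
  obtain C where "\<And>i. t i \<le> C"
    using lpos_bounded[OF assms(1)] by blast
  then have "\<bar>x n i\<bar> \<le> C" for n i
    using assms(2,3) unfolding nonneg_cone_def by (metis abs_of_nonneg le_funD mem_Collect_eq order_trans)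
  then show ?thesis by blast
qed

lemma linf_norm_le: "(\<And>i. \<bar>s i\<bar> \<le> c) \<Longrightarrow> linf_norm s \<le> c"
  unfolding linf_norm_def by (rule cSUP_least) auto

lemma funpow_in_invariant: "F ` A \<subseteq> A \<Longrightarrow> s \<in> A \<Longrightarrow> (F ^^ n) s \<in> A"
  by (induction n) auto

lemma funpow_le_prefixed_point:
  fixes F :: "'a::order \<Rightarrow> 'a"
  assumes "mono_on A F" "F ` A \<subseteq> A" "s \<in> A" "t \<in> A" "s \<le> t" "F t \<le> t"
  shows "(F ^^ n) s \<le> t"
proof (induction n)
  case (Suc n)
  have "F ((F ^^ n) s) \<le> F t"
    using mono_onD[OF assms(1) funpow_in_invariant[OF assms(2,3)] assms(4) Suc] .
  then show ?case
    using assms(6) by (auto intro: order_trans)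
qed (use assms(5) in simp)

lemma incseq_funpow:
  fixes F :: "'a::order \<Rightarrow> 'a"
  assumes "mono_on A F" "F ` A \<subseteq> A" "s \<in> A" "s \<le> F s"
  shows "incseq (\<lambda>n. (F ^^ n) s)"
proof (rule incseq_SucI)
  fix n show "(F ^^ n) s \<le> (F ^^ Suc n) s"
  proof (induction n)
    case (Suc n)
    show ?case
      using mono_onD[OF assms(1) funpow_in_invariant[OF assms(2,3)] funpow_in_invariant[OF assms(2,3)] Suc]
      by simp
  qed (use assms(4) in simp)
qed

lemma trajectories_bounded_if_cofinal_Psi:
  fixes F :: "('i \<Rightarrow> real) \<Rightarrow> ('i \<Rightarrow> real)"
  assumes "mono_on nonneg_cone F" "F ` nonneg_cone \<subseteq> nonneg_cone" "cofinal (Psi F)"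
  shows "trajectories_bounded F"
  unfolding trajectories_bounded_def
proof
  fix s :: "'i \<Rightarrow> real" assume s: "s \<in> lpos"
  then obtain t where t: "t \<in> lpos" "F t \<le> t" "s \<le> t"
    using assms(3) unfolding cofinal_def Psi_def by blast
  show "\<exists>C. \<forall>n i. \<bar>(F ^^ n) s i\<bar> \<le> C"
    using s t lpos_subset_nonneg_cone
    by (intro bounded_if_below_lpos[OF t(1)] funpow_in_invariant[OF assms(2)]
        funpow_le_prefixed_point[OF assms(1,2)]) auto
qed

definition pointwise_seq_continuous :: "(('i \<Rightarrow> real) \<Rightarrow> ('i \<Rightarrow> real)) \<Rightarrow> bool" where
  "pointwise_seq_continuous T \<longleftrightarrow>
     (\<forall>x s. range x \<subseteq> nonneg_cone \<longrightarrow> s \<in> nonneg_cone \<longrightarrow> (\<forall>j. (\<lambda>n. x n j) \<longlonglongrightarrow> s j) \<longrightarrow>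
        (\<forall>i. (\<lambda>n. T (x n) i) \<longlonglongrightarrow> T s i))"

lemma Psi_above_increasing_bounded_seq:
  assumes cont: "pointwise_seq_continuous T"
    and inc: "incseq x" and x0: "x 0 \<in> lpos"
    and bdd: "\<And>n i. x n i \<le> C" and step: "\<And>n. T (x n) \<le> x (Suc n)"
  shows "\<exists>t\<in>Psi T. x 0 \<le> t"
proof -
  define t where "t i = (SUP n. x n i)" for i
  have bdd_range: "bdd_above (range (\<lambda>n. x n i))" for i
    by (intro bdd_aboveI2[where M = C]) (rule bdd)
  have x_le_t: "x n \<le> t" for n
    by (auto simp: le_fun_def t_def intro: cSUP_upper[OF _ bdd_range])
  have conv: "(\<lambda>n. x n i) \<longlonglongrightarrow> t i" for i
    unfolding t_def using inc
    by (intro LIMSEQ_incseq_SUP[OF bdd_range]) (auto simp: incseq_def le_fun_def)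
  have x0_nonneg: "0 \<le> x 0 i" for i
    using x0 lpos_subset_nonneg_cone by (auto simp: nonneg_cone_def)
  have x_cone: "x n \<in> nonneg_cone" for n
  proof -
    have "x 0 i \<le> x n i" for i
      using inc by (simp add: incseq_def le_fun_def)
    then show ?thesis
      using x0_nonneg by (simp add: nonneg_cone_def) (meson order_trans)
  qed
  have t_cone: "t \<in> nonneg_cone"
    using x0_nonneg x_le_t[of 0] by (simp add: nonneg_cone_def le_fun_def) (meson order_trans)
  have t_lpos: "t \<in> lpos"
    by (rule lposI[OF t_cone, of C]) (auto simp: t_def intro: cSUP_least bdd)
  have "T t i \<le> t i" for i
  proof (rule LIMSEQ_le_const2)
    show "(\<lambda>n. T (x n) i) \<longlonglongrightarrow> T t i"
      using cont x_cone t_cone conv unfolding pointwise_seq_continuous_def by blast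
    show "\<exists>N. \<forall>n\<ge>N. T (x n) i \<le> t i"
      using step x_le_t by (meson le_funD order_trans)
  qed
  then show ?thesis
    using t_lpos x_le_t[of 0] unfolding Psi_def by (auto simp: le_fun_def)
qed

locale monotone_cone_operator =
  fixes T :: "('i \<Rightarrow> real) \<Rightarrow> ('i \<Rightarrow> real)"
  assumes mono: "mono_on nonneg_cone T"
    and nonneg: "T ` nonneg_cone \<subseteq> nonneg_cone"
    and continuous: "pointwise_seq_continuous T"
begin

lemma mono_omax_const: "mono_on nonneg_cone (\<lambda>s. omax b (T s))"
  using mono by (auto simp: mono_on_def intro: omax_mono)

lemma mono_omax_self: "mono_on nonneg_cone (\<lambda>s. omax s (T s))"
  using mono by (auto simp: mono_on_def intro: omax_mono)

lemma omax_const_in_nonneg_cone: "b \<in> nonneg_cone \<Longrightarrow> (\<lambda>s. omax b (T s)) ` nonneg_cone \<subseteq> nonneg_cone"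
  by (auto intro: omax_in_nonneg_cone)

lemma omax_self_in_nonneg_cone: "(\<lambda>s. omax s (T s)) ` nonneg_cone \<subseteq> nonneg_cone"
  by (auto intro: omax_in_nonneg_cone)

lemma cofinal_Psi_omax_const:
  assumes "cofinal (Psi T)" "b \<in> lpos"
  shows "cofinal (Psi (\<lambda>s. omax b (T s)))"
  unfolding cofinal_def
proof
  fix s :: "'i \<Rightarrow> real" assume "s \<in> lpos"
  then obtain t where "t \<in> Psi T" "omax b s \<le> t"
    using assms omax_in_lpos unfolding cofinal_def by blast
  then show "\<exists>t\<in>Psi (\<lambda>s. omax b (T s)). s \<le> t"
    by (auto simp: Psi_def omax_le_iff)
qed

lemma Psi_omax_self: "Psi (\<lambda>s. omax s (T s)) = Psi T"
  by (auto simp: Psi_def omax_le_iff)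

lemma cofinal_iff_trajectories_bounded_omax_const:
  "cofinal (Psi T) \<longleftrightarrow> (\<forall>b\<in>lpos. trajectories_bounded (\<lambda>s. omax b (T s)))"
proof
  assume "cofinal (Psi T)"
  show "\<forall>b\<in>lpos. trajectories_bounded (\<lambda>s. omax b (T s))"
  proof (intro ballI trajectories_bounded_if_cofinal_Psi mono_omax_const)
    fix b :: "'i \<Rightarrow> real" assume "b \<in> lpos"
    then show "(\<lambda>s. omax b (T s)) ` nonneg_cone \<subseteq> nonneg_cone"
      using lpos_subset_nonneg_cone by (intro omax_const_in_nonneg_cone) blast
    show "cofinal (Psi (\<lambda>s. omax b (T s)))"
      by (rule cofinal_Psi_omax_const) fact+
  qed
next
  assume bounded: "\<forall>b\<in>lpos. trajectories_bounded (\<lambda>s. omax b (T s))"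
  show "cofinal (Psi T)"
    unfolding cofinal_def
  proof
    fix s :: "'i \<Rightarrow> real" assume s: "s \<in> lpos"
    define x where "x n = ((\<lambda>t. omax s (T t)) ^^ n) s" for n
    obtain C where "\<And>n i. \<bar>x n i\<bar> \<le> C"
      using bounded s unfolding trajectories_bounded_def x_def by blast
    moreover have "incseq x"
      unfolding x_def using s lpos_subset_nonneg_cone
      by (intro incseq_funpow[OF mono_omax_const omax_const_in_nonneg_cone]) (auto intro: omax_upper1)
    ultimately show "\<exists>t\<in>Psi T. s \<le> t"
      using Psi_above_increasing_bounded_seq[OF continuous, of x C] s
      by (auto simp: x_def omax_upper2 abs_le_iff)
  qed
qed

lemma cofinal_iff_trajectories_bounded_omax_self:
  "cofinal (Psi T) \<longleftrightarrow> trajectories_bounded (\<lambda>s. omax s (T s))"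
proof
  assume "cofinal (Psi T)"
  then show "trajectories_bounded (\<lambda>s. omax s (T s))"
    by (intro trajectories_bounded_if_cofinal_Psi mono_omax_self omax_self_in_nonneg_cone)
      (simp add: Psi_omax_self)
next
  assume bounded: "trajectories_bounded (\<lambda>s. omax s (T s))"
  show "cofinal (Psi T)"
    unfolding cofinal_def
  proof
    fix s :: "'i \<Rightarrow> real" assume s: "s \<in> lpos"
    define x where "x n = ((\<lambda>t. omax t (T t)) ^^ n) s" for n
    obtain C where "\<And>n i. \<bar>x n i\<bar> \<le> C"
      using bounded s unfolding trajectories_bounded_def x_def by blast
    moreover have "incseq x"
      by (rule incseq_SucI) (simp add: x_def omax_upper1)
    ultimately show "\<exists>t\<in>Psi T. s \<le> t"
      using Psi_above_increasing_bounded_seq[OF continuous, of x C] s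
      by (auto simp: x_def omax_upper2 abs_le_iff)
  qed
qed

lemma omax_self_trajectory_below_orbit:
  assumes s: "s \<in> nonneg_cone" and t: "t \<in> nonneg_cone" and n: "0 < n"
    and below: "\<forall>l<n. s \<le> (T ^^ l) t" and cycle: "(T ^^ n) t \<le> t"
  shows "\<forall>l<n. ((\<lambda>u. omax u (T u)) ^^ k) s \<le> (T ^^ l) t"
proof (induction k)
  case 0
  show ?case using below by simp
next
  case (Suc k)
  note IH = Suc.IH
  let ?x = "((\<lambda>u. omax u (T u)) ^^ k) s"
  have x: "?x \<in> nonneg_cone"
    using funpow_in_invariant[OF omax_self_in_nonneg_cone s] .
  have orbit: "(T ^^ l) t \<in> nonneg_cone" for l
    using funpow_in_invariant[OF nonneg t] .
  have "T ?x \<le> (T ^^ l) t" if "l < n" for l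
  proof (cases l)
    case 0
    have "T ?x \<le> T ((T ^^ (n - 1)) t)"
      using mono_onD[OF mono x orbit] IH n by simp
    also have "\<dots> = (T ^^ n) t"
      using n by (metis Suc_diff_1 comp_apply funpow.simps(2))
    finally show ?thesis
      using cycle 0 by (auto intro: order_trans)
  next
    case (Suc m)
    then show ?thesis
      using mono_onD[OF mono x orbit] IH that by simp
  qed
  then show ?case
    using IH by (simp add: omax_le_iff)
qed

lemma cofinal_iff_dominating_orbit:
  "cofinal (Psi T) \<longleftrightarrow> (\<forall>s\<in>lpos. \<exists>t\<in>lpos. \<exists>n\<ge>1. (\<forall>l<n. s \<le> (T ^^ l) t) \<and> (T ^^ n) t \<le> t)"
proof
  assume cofinal: "cofinal (Psi T)"
  show "\<forall>s\<in>lpos. \<exists>t\<in>lpos. \<exists>n\<ge>1. (\<forall>l<n. s \<le> (T ^^ l) t) \<and> (T ^^ n) t \<le> t"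
  proof
    fix s :: "'i \<Rightarrow> real" assume "s \<in> lpos"
    then obtain t where "t \<in> lpos" "T t \<le> t" "s \<le> t"
      using cofinal unfolding cofinal_def Psi_def by blast
    then show "\<exists>t\<in>lpos. \<exists>n\<ge>1. (\<forall>l<n. s \<le> (T ^^ l) t) \<and> (T ^^ n) t \<le> t"
      by (intro bexI[of _ t] exI[of _ 1]) auto
  qed
next
  assume orbit: "\<forall>s\<in>lpos. \<exists>t\<in>lpos. \<exists>n\<ge>1. (\<forall>l<n. s \<le> (T ^^ l) t) \<and> (T ^^ n) t \<le> t"
  have "trajectories_bounded (\<lambda>s. omax s (T s))"
    unfolding trajectories_bounded_def
  proof
    fix s :: "'i \<Rightarrow> real" assume s: "s \<in> lpos"
    then obtain t n where t: "t \<in> lpos" "n \<ge> 1" "\<forall>l<n. s \<le> (T ^^ l) t" "(T ^^ n) t \<le> t"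
      using orbit by blast
    have cone: "s \<in> nonneg_cone" "t \<in> nonneg_cone"
      using s t(1) lpos_subset_nonneg_cone by blast+
    have "0 < n"
      using t(2) by simp
    then have "((\<lambda>u. omax u (T u)) ^^ k) s \<le> (T ^^ 0) t" for k
      using omax_self_trajectory_below_orbit[OF cone _ t(3,4)] by blast
    then show "\<exists>C. \<forall>k i. \<bar>((\<lambda>s. omax s (T s)) ^^ k) s i\<bar> \<le> C"
      using s lpos_subset_nonneg_cone
      by (intro bounded_if_below_lpos[OF t(1)] funpow_in_invariant[OF omax_self_in_nonneg_cone]) auto
  qed
  then show "cofinal (Psi T)"
    using cofinal_iff_trajectories_bounded_omax_self by blast
qed

end

lemma Kinf_mono_on: "Kinf g \<Longrightarrow> mono_on {0..} g"
  unfolding Kinf_def by (blast intro: strict_mono_on_imp_mono_on)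

lemma Kinf_nonneg: "Kinf g \<Longrightarrow> 0 \<le> r \<Longrightarrow> 0 \<le> g r"
  using mono_onD[OF Kinf_mono_on, of g 0 r] unfolding Kinf_def by auto

lemma Kinf_continuous_on: "Kinf g \<Longrightarrow> continuous_on {0..} g"
  unfolding Kinf_def by blast

lemma gain_operator_finite: "gain_operator II \<gamma> \<mu> \<Longrightarrow> finite (II i)"
  by (simp add: gain_operator_def)

lemma gain_operator_Kinf: "gain_operator II \<gamma> \<mu> \<Longrightarrow> j \<in> II i \<Longrightarrow> Kinf (\<gamma> i j)"
  by (simp add: gain_operator_def)

lemma gain_operator_mono:
  "gain_operator II \<gamma> \<mu> \<Longrightarrow> s \<in> lpos \<Longrightarrow> t \<in> lpos \<Longrightarrow> s \<le> t \<Longrightarrow> \<mu> i s \<le> \<mu> i t"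
  by (simp add: gain_operator_def)

lemma gain_operator_finite_support:
  assumes "gain_operator II \<gamma> \<mu>" "finite J" "s \<in> lpos" "\<forall>j. j \<notin> J \<longrightarrow> s j = 0"
  shows "\<mu> i s < \<infinity>"
    and "\<And>\<epsilon>. \<epsilon> > 0 \<Longrightarrow> \<exists>\<delta>>0. \<forall>t\<in>lpos. (\<forall>j. j \<notin> J \<longrightarrow> t j = 0) \<longrightarrow> linf_norm (t - s) < \<delta> \<longrightarrow>
          \<bar>enn2real (\<mu> i t) - enn2real (\<mu> i s)\<bar> < \<epsilon>"
proof -
  have "let V = {s\<in>lpos. \<forall>j. j \<notin> J \<longrightarrow> s j = 0} in
         (\<forall>s\<in>V. \<mu> i s < \<infinity>) \<and>
         (\<forall>s\<in>V. \<forall>\<epsilon>>0. \<exists>\<delta>>0. \<forall>t\<in>V. linf_norm (t - s) < \<delta> \<longrightarrow>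
              \<bar>enn2real (\<mu> i t) - enn2real (\<mu> i s)\<bar> < \<epsilon>)"
    using assms(1,2) unfolding gain_operator_def by (elim conjE allE) (erule mp)
  then show "\<mu> i s < \<infinity>" "\<And>\<epsilon>. \<epsilon> > 0 \<Longrightarrow> \<exists>\<delta>>0. \<forall>t\<in>lpos. (\<forall>j. j \<notin> J \<longrightarrow> t j = 0) \<longrightarrow> linf_norm (t - s) < \<delta> \<longrightarrow>
          \<bar>enn2real (\<mu> i t) - enn2real (\<mu> i s)\<bar> < \<epsilon>"
    using assms(3,4) unfolding Let_def by blast+
qed

lemma mu_tendsto_finite_support:
  assumes go: "gain_operator II \<gamma> \<mu>" and J: "finite J"
    and v: "v \<in> lpos" "\<forall>j. j \<notin> J \<longrightarrow> v j = 0"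
    and w: "\<And>n. w n \<in> lpos" "\<And>n. \<forall>j. j \<notin> J \<longrightarrow> w n j = 0"
    and conv: "\<And>j. j \<in> J \<Longrightarrow> (\<lambda>n. w n j) \<longlonglongrightarrow> v j"
  shows "(\<lambda>n. enn2real (\<mu> i (w n))) \<longlonglongrightarrow> enn2real (\<mu> i v)"
proof (rule tendstoI)
  \<comment> \<open>on vectors supported in the finite set \<open>J\<close>, coordinatewise convergence is sup-norm convergence\<close>
  fix \<epsilon> :: real assume "0 < \<epsilon>"
  then obtain \<delta> where "\<delta> > 0" and \<delta>: "\<forall>t\<in>lpos. (\<forall>j. j \<notin> J \<longrightarrow> t j = 0) \<longrightarrow>
      linf_norm (t - v) < \<delta> \<longrightarrow> \<bar>enn2real (\<mu> i t) - enn2real (\<mu> i v)\<bar> < \<epsilon>"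
    using gain_operator_finite_support(2)[OF go J v] by blast
  have "\<forall>\<^sub>F n in sequentially. \<forall>j\<in>J. dist (w n j) (v j) < \<delta> / 2"
  proof (intro eventually_ball_finite[OF J] ballI)
    fix j assume "j \<in> J"
    show "\<forall>\<^sub>F n in sequentially. dist (w n j) (v j) < \<delta> / 2"
      by (rule tendstoD[OF conv[OF \<open>j \<in> J\<close>]]) (use \<open>\<delta> > 0\<close> in simp)
  qed
  then show "\<forall>\<^sub>F n in sequentially. dist (enn2real (\<mu> i (w n))) (enn2real (\<mu> i v)) < \<epsilon>"
  proof (rule eventually_mono)
    fix n assume close: "\<forall>j\<in>J. dist (w n j) (v j) < \<delta> / 2"
    have "linf_norm (w n - v) \<le> \<delta> / 2"
    proof (rule linf_norm_le)
      fix j show "\<bar>(w n - v) j\<bar> \<le> \<delta> / 2"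
        using close v(2) w(2)[of n] \<open>\<delta> > 0\<close> by (cases "j \<in> J") (auto simp: dist_real_def)
    qed
    then have "linf_norm (w n - v) < \<delta>"
      using \<open>\<delta> > 0\<close> by linarith
    then show "dist (enn2real (\<mu> i (w n))) (enn2real (\<mu> i v)) < \<epsilon>"
      using \<delta> w(1,2) by (simp add: dist_real_def)
  qed
qed

definition gain_input :: "('i \<Rightarrow> 'i set) \<Rightarrow> ('i \<Rightarrow> 'i \<Rightarrow> real \<Rightarrow> real) \<Rightarrow> 'i \<Rightarrow> ('i \<Rightarrow> real) \<Rightarrow> ('i \<Rightarrow> real)"
  where "gain_input II \<gamma> i s = (\<lambda>j. if j \<in> II i then \<gamma> i j (s j) else 0)"

lemma Gam_eq_gain_input: "Gam II \<gamma> \<mu> s i = enn2real (\<mu> i (gain_input II \<gamma> i s))"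
  by (simp add: Gam_def gain_input_def)

lemma gain_input_outside: "j \<notin> II i \<Longrightarrow> gain_input II \<gamma> i s j = 0"
  by (simp add: gain_input_def)

lemma gain_input_in_lpos:
  assumes go: "gain_operator II \<gamma> \<mu>" and s: "s \<in> nonneg_cone"
  shows "gain_input II \<gamma> i s \<in> lpos"
proof (rule lposI)
  show "gain_input II \<gamma> i s \<in> nonneg_cone"
    using s Kinf_nonneg[OF gain_operator_Kinf[OF go]]
    by (auto simp: nonneg_cone_def gain_input_def)
  show "gain_input II \<gamma> i s j \<le> Max (insert 0 ((\<lambda>j. \<gamma> i j (s j)) ` II i))" for j
    using gain_operator_finite[OF go] by (auto simp: gain_input_def)
qed

lemma gain_input_mono:
  assumes go: "gain_operator II \<gamma> \<mu>" and "s \<in> nonneg_cone" "s \<le> t"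
  shows "gain_input II \<gamma> i s \<le> gain_input II \<gamma> i t"
  using assms mono_onD[OF Kinf_mono_on[OF gain_operator_Kinf[OF go]]]
  by (auto simp: gain_input_def le_fun_def nonneg_cone_def intro: order_trans)

lemma Gam_in_nonneg_cone: "Gam II \<gamma> \<mu> s \<in> nonneg_cone"
  by (simp add: Gam_def nonneg_cone_def)

lemma Gam_mono:
  fixes II :: "'i \<Rightarrow> 'i set"
  assumes go: "gain_operator II \<gamma> \<mu>"
  shows "mono_on nonneg_cone (Gam II \<gamma> \<mu>)"
proof (rule mono_onI, rule le_funI)
  fix s t :: "'i \<Rightarrow> real" and i assume s: "s \<in> nonneg_cone" and t: "t \<in> nonneg_cone" and "s \<le> t"
  have "\<mu> i (gain_input II \<gamma> i s) \<le> \<mu> i (gain_input II \<gamma> i t)"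
    using \<open>s \<le> t\<close> by (intro gain_operator_mono[OF go] gain_input_in_lpos[OF go] gain_input_mono[OF go] s t)
  moreover have "\<mu> i (gain_input II \<gamma> i t) < \<infinity>"
    by (rule gain_operator_finite_support(1)[OF go gain_operator_finite[OF go, of i] gain_input_in_lpos[OF go t]])
      (simp add: gain_input_outside)
  ultimately show "Gam II \<gamma> \<mu> s i \<le> Gam II \<gamma> \<mu> t i"
    unfolding Gam_eq_gain_input by (simp add: enn2real_mono)
qed

lemma Gam_pointwise_seq_continuous:
  fixes II :: "'i \<Rightarrow> 'i set"
  assumes go: "gain_operator II \<gamma> \<mu>"
  shows "pointwise_seq_continuous (Gam II \<gamma> \<mu>)"
  unfolding pointwise_seq_continuous_def
proof (intro allI impI)
  fix x :: "nat \<Rightarrow> 'i \<Rightarrow> real" and s i assume x: "range x \<subseteq> nonneg_cone" and s: "s \<in> nonneg_cone"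
    and conv: "\<forall>j. (\<lambda>n. x n j) \<longlonglongrightarrow> s j"
  have "(\<lambda>n. \<gamma> i j (x n j)) \<longlonglongrightarrow> \<gamma> i j (s j)" if "j \<in> II i" for j
  proof (rule continuous_on_tendsto_compose[OF Kinf_continuous_on[OF gain_operator_Kinf[OF go that]]])
    show "(\<lambda>n. x n j) \<longlonglongrightarrow> s j"
      using conv by blast
    show "s j \<in> {0..}"
      using s by (simp add: nonneg_cone_def)
    show "\<forall>\<^sub>F n in sequentially. x n j \<in> {0..}"
      using x by (auto simp: nonneg_cone_def intro!: always_eventually)
  qed
  then have "(\<lambda>n. gain_input II \<gamma> i (x n) j) \<longlonglongrightarrow> gain_input II \<gamma> i s j" if "j \<in> II i" for j
    using that by (simp add: gain_input_def)
  then show "(\<lambda>n. Gam II \<gamma> \<mu> (x n) i) \<longlonglongrightarrow> Gam II \<gamma> \<mu> s i"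
    unfolding Gam_eq_gain_input using x s
    by (intro mu_tendsto_finite_support[OF go gain_operator_finite[OF go]] gain_input_in_lpos[OF go])
      (auto simp: gain_input_outside)
qed

lemma monotone_cone_operator_Gam:
  "gain_operator II \<gamma> \<mu> \<Longrightarrow> monotone_cone_operator (Gam II \<gamma> \<mu>)"
  by unfold_locales (auto intro: Gam_mono Gam_in_nonneg_cone Gam_pointwise_seq_continuous)

theorem proposition2p23:
  fixes II :: "'i::countable \<Rightarrow> 'i set"
    and \<gamma> :: "'i \<Rightarrow> 'i \<Rightarrow> real \<Rightarrow> real"
    and \<mu> :: "'i \<Rightarrow> ('i \<Rightarrow> real) \<Rightarrow> ennreal"
  assumes "gain_operator II \<gamma> \<mu>"
  defines "\<Gamma> \<equiv> Gam II \<gamma> \<mu>"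
  shows "(cofinal (Psi \<Gamma>) \<longleftrightarrow> (\<forall>b\<in>lpos. trajectories_bounded (\<lambda>s. omax b (\<Gamma> s))))
       \<and> (cofinal (Psi \<Gamma>) \<longleftrightarrow> trajectories_bounded (\<lambda>s. omax s (\<Gamma> s)))
       \<and> (cofinal (Psi \<Gamma>) \<longleftrightarrow>
            (\<forall>s\<in>lpos. \<exists>s'\<in>lpos. \<exists>n\<ge>1. (\<forall>l<n. s \<le> (\<Gamma> ^^ l) s') \<and> (\<Gamma> ^^ n) s' \<le> s'))"
proof -
  interpret monotone_cone_operator \<Gamma>
    unfolding \<Gamma>_def by (rule monotone_cone_operator_Gam[OF assms(1)])
  show ?thesis
    using cofinal_iff_trajectories_bounded_omax_const cofinal_iff_trajectories_bounded_omax_self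
      cofinal_iff_dominating_orbit by blast
qed

end
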